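(* Let $n\ge 1$ and $r\ge 1$ be integers. If $n\ge 2r$, then the pendant complete graph $K_n^*$ is $r$-EKR. If $n>2r$, then $K_n^*$ is strictly $r$-EKR.
   Context: All graphs are finite and simple. An independent $r$-set of a graph $G$ is a set of $r$ pairwise non-adjacent vertices; $\mathcal{I}^{(r)}(G)$ denotes the family of all independent $r$-sets of $G$, and for $v\in V(G)$, $\mathcal{I}^{(r)}_v(G)$ denotes the subfamily of those containing $v$ (the $r$-star with centre $v$). A family $\mathcal{A}\subseteq \mathcal{I}^{(r)}(G)$ is intersecting if every two members of $\mathcal{A}$ have nonempty intersection. $G$ is $r$-EKR if some $r$-star $\mathcal{I}^{(r)}_v(G)$ has size equal to the maximum size of an intersecting subfamily of $\mathcal{I}^{(r)}(G)$; $G$ is strictly $r$-EKR if moreover every intersecting subfamily of $\mathcal{I}^{(r)}(G)$ of maximum size is an $r$-star. For a graph $G$ with vertices $x_1,\dots,x_n$, the pendant graph $G^*$ has vertex set $\{x_1,\dots,x_n\}\sqcup\{p_1,\dots,p_n\}$ and edge set $E(G)\sqcup\{x_1p_1,\dots,x_np_n\}$. $K_n^*$ is the pendant graph of the complete graph $K_n$. *)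

theory Defs
  imports Main
begin

text \<open>A finite simple graph is given by a vertex set V and a symmetric irreflexive
adjacency relation E (only its restriction to V matters).\<close>

definition indep_rsets :: "'a set \<Rightarrow> ('a \<Rightarrow> 'a \<Rightarrow> bool) \<Rightarrow> nat \<Rightarrow> 'a set set" where
  "indep_rsets V E r = {A. A \<subseteq> V \<and> finite A \<and> card A = r \<and> (\<forall>x\<in>A. \<forall>y\<in>A. \<not> E x y)}"

definition indep_star :: "'a set \<Rightarrow> ('a \<Rightarrow> 'a \<Rightarrow> bool) \<Rightarrow> nat \<Rightarrow> 'a \<Rightarrow> 'a set set" where
  "indep_star V E r v = {A \<in> indep_rsets V E r. v \<in> A}"

definition intersecting :: "'a set set \<Rightarrow> bool" where
  "intersecting F \<longleftrightarrow> (\<forall>A\<in>F. \<forall>B\<in>F. A \<inter> B \<noteq> {})"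

definition max_intersecting :: "'a set \<Rightarrow> ('a \<Rightarrow> 'a \<Rightarrow> bool) \<Rightarrow> nat \<Rightarrow> nat" where
  "max_intersecting V E r =
     Max {card F | F. F \<subseteq> indep_rsets V E r \<and> intersecting F}"

definition r_EKR :: "'a set \<Rightarrow> ('a \<Rightarrow> 'a \<Rightarrow> bool) \<Rightarrow> nat \<Rightarrow> bool" where
  "r_EKR V E r \<longleftrightarrow> (\<exists>v\<in>V. card (indep_star V E r v) = max_intersecting V E r)"

definition strictly_r_EKR :: "'a set \<Rightarrow> ('a \<Rightarrow> 'a \<Rightarrow> bool) \<Rightarrow> nat \<Rightarrow> bool" where
  "strictly_r_EKR V E r \<longleftrightarrow> r_EKR V E r \<and>
     (\<forall>F. F \<subseteq> indep_rsets V E r \<and> intersecting F \<and> card F = max_intersecting V E r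
          \<longrightarrow> (\<exists>v\<in>V. F = indep_star V E r v))"

text \<open>Pendant graph: vertex x_i is Inl x, pendant vertex p_i is Inr x.\<close>

definition pendant_V :: "'a set \<Rightarrow> ('a + 'a) set" where
  "pendant_V V = Inl ` V \<union> Inr ` V"

fun pendant_E :: "('a \<Rightarrow> 'a \<Rightarrow> bool) \<Rightarrow> 'a + 'a \<Rightarrow> 'a + 'a \<Rightarrow> bool" where
  "pendant_E E (Inl x) (Inl y) = E x y"
| "pendant_E E (Inl x) (Inr y) = (x = y)"
| "pendant_E E (Inr x) (Inl y) = (x = y)"
| "pendant_E E (Inr x) (Inr y) = False"

definition K_V :: "nat \<Rightarrow> nat set" where "K_V n = {..<n}"
definition K_E :: "nat \<Rightarrow> nat \<Rightarrow> bool" where "K_E x y \<longleftrightarrow> x \<noteq> y"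

end

theory Submission
  imports Defs "HOL-Combinatorics.Permutations"
begin

text \<open>An independent \<open>r\<close>-set of \<open>K_n^*\<close> consists either of \<open>r\<close> pendant vertices or of one
  vertex \<open>x_m\<close> of \<open>K_n\<close> together with \<open>r - 1\<close> pendant vertices other than \<open>p_m\<close>.
  Following Katona, place \<open>{..<n}\<close> around a circle. The pendant arcs (\<open>r\<close> consecutive
  pendant vertices) and the mixed arcs (a vertex \<open>x_m\<close> followed by the \<open>r - 1\<close> pendant
  vertices after \<open>m\<close>) contain at most \<open>r\<close>, resp. \<open>r - 1\<close>, members of an intersecting family
  when \<open>n \<ge> 2 r\<close>, and at least that many members of the star of a pendant vertex. Averaging
  over all arrangements, separately for the two kinds of sets, bounds every intersecting
  family by such a star.

  For \<open>n > 2 r\<close> equality forces the pendant members of a maximum family to be, on every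
  arrangement, exactly the pendant arcs through one position. A family of \<open>r\<close>-sets with this
  property contains all \<open>r\<close>-sets through some point \<open>x\<close>, and then every member of the
  maximum family must contain \<open>p_x\<close>.\<close>

section \<open>Maximum intersecting families and stars\<close>

lemma card_split_filter:
  assumes "finite X"
  shows "card X = card {A\<in>X. P A} + card {A\<in>X. \<not> P A}"
proof -
  have "X = {A\<in>X. P A} \<union> {A\<in>X. \<not> P A}"
    by auto
  then show ?thesis
    using assms by (metis (no_types, lifting) card_Un_disjoint disjoint_iff finite_Un mem_Collect_eq)
qed

lemma intersectingD: "intersecting F \<Longrightarrow> A \<in> F \<Longrightarrow> B \<in> F \<Longrightarrow> A \<inter> B \<noteq> {}"
  by (simp add: intersecting_def)

lemma intersecting_indep_star: "intersecting (indep_star V E r v)"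
  unfolding intersecting_def indep_star_def by blast

lemma indep_star_subset: "indep_star V E r v \<subseteq> indep_rsets V E r"
  unfolding indep_star_def by blast

lemma finite_intersecting_cards:
  assumes "finite (indep_rsets V E r)"
  shows "finite {card F | F. F \<subseteq> indep_rsets V E r \<and> intersecting F}"
proof -
  have "{card F | F. F \<subseteq> indep_rsets V E r \<and> intersecting F} \<subseteq> card ` Pow (indep_rsets V E r)"
    by auto
  then show ?thesis
    using assms finite_subset by blast
qed

lemma card_le_max_intersecting:
  assumes "finite (indep_rsets V E r)" "F \<subseteq> indep_rsets V E r" "intersecting F"
  shows "card F \<le> max_intersecting V E r"
  unfolding max_intersecting_def
  using assms by (intro Max_ge finite_intersecting_cards) blast+

lemma max_intersecting_eqI:
  assumes "finite (indep_rsets V E r)" "G \<subseteq> indep_rsets V E r" "intersecting G"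
    and "\<And>F. F \<subseteq> indep_rsets V E r \<Longrightarrow> intersecting F \<Longrightarrow> card F \<le> card G"
  shows "max_intersecting V E r = card G"
  unfolding max_intersecting_def
  using assms by (intro Max_eqI finite_intersecting_cards) blast+

lemma r_EKR_if_star_maximum:
  assumes "finite (indep_rsets V E r)" "v \<in> V"
    and "\<And>F. F \<subseteq> indep_rsets V E r \<Longrightarrow> intersecting F \<Longrightarrow> card F \<le> card (indep_star V E r v)"
  shows "r_EKR V E r" and "max_intersecting V E r = card (indep_star V E r v)"
proof -
  show max: "max_intersecting V E r = card (indep_star V E r v)"
    using assms by (intro max_intersecting_eqI indep_star_subset intersecting_indep_star)
  show "r_EKR V E r"
    unfolding r_EKR_def using max assms(2) by auto
qed

lemma indep_rsets_1: "indep_rsets V E 1 = (\<lambda>v. {v}) ` {v\<in>V. \<not> E v v}"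
proof (intro equalityI subsetI)
  fix A assume "A \<in> indep_rsets V E 1"
  then obtain v where "A = {v}" "v \<in> V" "\<not> E v v"
    by (auto simp: indep_rsets_def card_1_singleton_iff)
  then show "A \<in> (\<lambda>v. {v}) ` {v\<in>V. \<not> E v v}"
    by blast
qed (auto simp: indep_rsets_def)

lemma indep_star_1: "v \<in> V \<Longrightarrow> \<not> E v v \<Longrightarrow> indep_star V E 1 v = {{v}}"
  unfolding indep_star_def indep_rsets_1 by auto

lemma card_intersecting_1_le:
  assumes "finite V" "F \<subseteq> indep_rsets V E 1" "intersecting F"
  shows "card F \<le> 1"
proof -
  have F_singletons: "F \<subseteq> (\<lambda>v. {v}) ` V"
    using assms(2) unfolding indep_rsets_1 by auto
  then have "finite F"
    using assms(1) by (metis finite_imageI finite_subset)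
  moreover have "A = B" if AB: "A \<in> F" "B \<in> F" for A B
  proof -
    obtain a b where "A = {a}" "B = {b}"
      using F_singletons AB by (meson imageE subsetD)
    then show ?thesis
      using intersectingD[OF assms(3) AB] by auto
  qed
  ultimately show ?thesis
    using card_le_Suc0_iff_eq by (metis One_nat_def)
qed

lemma strictly_1_EKR:
  assumes "finite V" "v \<in> V" "\<forall>v\<in>V. \<not> E v v"
  shows "strictly_r_EKR V E 1"
proof -
  have fin: "finite (indep_rsets V E 1)"
    using assms(1) unfolding indep_rsets_1 by simp
  have star: "indep_star V E 1 v = {{v}}"
    using assms(2,3) by (intro indep_star_1) auto
  have bound: "card F \<le> card (indep_star V E 1 v)"
    if "F \<subseteq> indep_rsets V E 1" "intersecting F" for F
    using card_intersecting_1_le[OF assms(1) that] star by simp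
  have max: "max_intersecting V E 1 = 1"
    using r_EKR_if_star_maximum(2)[OF fin assms(2) bound] star by simp
  show ?thesis
    unfolding strictly_r_EKR_def
  proof (intro conjI allI impI)
    show "r_EKR V E 1"
      by (rule r_EKR_if_star_maximum(1)[OF fin assms(2) bound])
    fix F assume F: "F \<subseteq> indep_rsets V E 1 \<and> intersecting F \<and> card F = max_intersecting V E 1"
    then obtain A where "F = {A}"
      using max by (auto simp: card_1_singleton_iff)
    moreover have "A \<in> (\<lambda>v. {v}) ` {v\<in>V. \<not> E v v}"
      using F \<open>F = {A}\<close> unfolding indep_rsets_1 by simp
    ultimately obtain u where "u \<in> V" "\<not> E u u" "F = {{u}}"
      by auto
    then show "\<exists>u\<in>V. F = indep_star V E 1 u"
      using indep_star_1[of u V E] by blast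
  qed
qed

section \<open>Katona's circle lemma\<close>

definition fwd_dist :: "nat \<Rightarrow> nat \<Rightarrow> nat \<Rightarrow> nat" where
  "fwd_dist n s p = (if s \<le> p then p - s else p + n - s)"

lemma fwd_dist_less: "s < n \<Longrightarrow> p < n \<Longrightarrow> fwd_dist n s p < n"
  by (auto simp: fwd_dist_def)

lemma fwd_dist_self [simp]: "fwd_dist n s s = 0"
  by (auto simp: fwd_dist_def)

lemma fwd_dist_add_swap: "s < n \<Longrightarrow> t < n \<Longrightarrow> s \<noteq> t \<Longrightarrow> fwd_dist n s t + fwd_dist n t s = n"
  by (auto simp: fwd_dist_def)

lemma fwd_dist_diff:
  "s < n \<Longrightarrow> t < n \<Longrightarrow> u < n \<Longrightarrow> fwd_dist n s t \<le> fwd_dist n s u \<Longrightarrow>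
    fwd_dist n t u = fwd_dist n s u - fwd_dist n s t"
  by (auto simp: fwd_dist_def split: if_splits)

lemma fwd_dist_inj: "s < n \<Longrightarrow> t < n \<Longrightarrow> u < n \<Longrightarrow> fwd_dist n s t = fwd_dist n s u \<Longrightarrow> t = u"
  by (auto simp: fwd_dist_def split: if_splits)

lemma fwd_dist_common_point:
  "s < n \<Longrightarrow> t < n \<Longrightarrow> p < n \<Longrightarrow> fwd_dist n s p < k \<Longrightarrow> fwd_dist n t p < k \<Longrightarrow>
    fwd_dist n s t < k \<or> fwd_dist n t s < k"
  by (auto simp: fwd_dist_def split: if_splits)

text \<open>The arcs of length \<open>k\<close> of the cycle \<open>Z/nZ\<close> that start at the points of \<open>W\<close>
  pairwise meet.\<close>

definition arcs_meet :: "nat \<Rightarrow> nat \<Rightarrow> nat set \<Rightarrow> bool" where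
  "arcs_meet n k W \<longleftrightarrow> (\<forall>s\<in>W. \<forall>t\<in>W. fwd_dist n s t < k \<or> fwd_dist n t s < k)"

lemma arcs_meet_through_point: "p < n \<Longrightarrow> arcs_meet n k {s. s < n \<and> fwd_dist n s p < k}"
  unfolding arcs_meet_def using fwd_dist_common_point by blast

text \<open>The arcs starting at \<open>s0 + d\<close> and at \<open>s0 + d - k\<close> (indices mod \<open>n\<close>) are disjoint
  when \<open>2 * k \<le> n\<close>; the offset identifies them, so injectivity of the offset on \<open>W\<close>
  is Katona's argument.\<close>

definition katona_offset :: "nat \<Rightarrow> nat \<Rightarrow> nat \<Rightarrow> nat \<Rightarrow> nat" where
  "katona_offset n k s0 t =
     (if fwd_dist n s0 t < k then fwd_dist n s0 t else fwd_dist n s0 t + k - n)"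

context
  fixes n k s0 :: nat and W :: "nat set"
  assumes k: "1 \<le> k" "2 * k \<le> n" and W: "W \<subseteq> {..<n}" "arcs_meet n k W" and s0: "s0 \<in> W"
begin

lemma katona_far_start:
  assumes "t \<in> W" "\<not> fwd_dist n s0 t < k"
  shows "n < fwd_dist n s0 t + k"
proof -
  have "t < n" "s0 < n" "s0 \<noteq> t"
    using assms W(1) s0 k by auto
  moreover have "fwd_dist n t s0 < k"
    using W(2) s0 assms unfolding arcs_meet_def by blast
  ultimately show ?thesis
    using fwd_dist_add_swap by fastforce
qed

lemma katona_offset_less: "t \<in> W \<Longrightarrow> katona_offset n k s0 t < k"
  using katona_far_start[of t] fwd_dist_less[of s0 n t] W(1) s0
  unfolding katona_offset_def by fastforce

lemma katona_offset_inj_on: "inj_on (katona_offset n k s0) W"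
proof (rule inj_onI, rule ccontr)
  fix t t' assume t: "t \<in> W" and t': "t' \<in> W" and eq: "katona_offset n k s0 t = katona_offset n k s0 t'"
    and ne: "t \<noteq> t'"
  have n: "s0 < n" "t < n" "t' < n"
    using s0 t t' W(1) by auto
  have meet: "fwd_dist n t t' < k \<or> fwd_dist n t' t < k"
    using W(2) t t' unfolding arcs_meet_def by blast
  have ne_dist: "fwd_dist n s0 t \<noteq> fwd_dist n s0 t'"
    using fwd_dist_inj n ne by blast
  have less: "fwd_dist n s0 t < n" "fwd_dist n s0 t' < n"
    using fwd_dist_less n by auto
  have "fwd_dist n s0 t' = fwd_dist n s0 t + n - k \<or> fwd_dist n s0 t = fwd_dist n s0 t' + n - k"
  proof (cases "fwd_dist n s0 t < k"; cases "fwd_dist n s0 t' < k")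
    assume "\<not> fwd_dist n s0 t < k" "\<not> fwd_dist n s0 t' < k"
    then show ?thesis
      using eq ne_dist katona_far_start[OF t] katona_far_start[OF t'] by (simp add: katona_offset_def)
  qed (use eq ne_dist less katona_far_start[OF t] katona_far_start[OF t'] in
        \<open>auto simp: katona_offset_def\<close>)
  then show False
  proof
    assume d: "fwd_dist n s0 t' = fwd_dist n s0 t + n - k"
    then have "fwd_dist n t t' = n - k"
      using fwd_dist_diff[OF n] k by simp
    then show False
      using meet fwd_dist_add_swap[OF n(2,3) ne] k by linarith
  next
    assume d: "fwd_dist n s0 t = fwd_dist n s0 t' + n - k"
    then have "fwd_dist n t' t = n - k"
      using fwd_dist_diff[OF n(1,3,2)] k by simp
    then show False
      using meet fwd_dist_add_swap[OF n(2,3) ne] k by linarith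
  qed
qed

lemma katona_offset_image: "katona_offset n k s0 ` W \<subseteq> {..<k}"
  using katona_offset_less by blast

context
  assumes k_less: "2 * k < n" and card_W: "card W = k"
begin

lemma katona_offset_bij: "katona_offset n k s0 ` W = {..<k}"
proof (rule card_subset_eq[OF finite_lessThan katona_offset_image])
  show "card (katona_offset n k s0 ` W) = card {..<k}"
    using card_image[OF katona_offset_inj_on] card_W by simp
qed

lemma katona_near_pred:
  assumes t: "t \<in> W" and j: "2 \<le> fwd_dist n s0 t" "fwd_dist n s0 t < k"
  shows "\<exists>t'\<in>W. fwd_dist n s0 t' = fwd_dist n s0 t - 1"
proof -
  have "fwd_dist n s0 t - 1 \<in> katona_offset n k s0 ` W"
    using katona_offset_bij j by simp
  then obtain t' where t': "t' \<in> W" "fwd_dist n s0 t - 1 = katona_offset n k s0 t'"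
    by blast
  show ?thesis
  proof (cases "fwd_dist n s0 t' < k")
    case True
    then show ?thesis
      using t' by (auto simp: katona_offset_def)
  next
    case False
    have n: "s0 < n" "t < n" "t' < n"
      using s0 t t' W(1) by auto
    have d: "fwd_dist n s0 t' = fwd_dist n s0 t - 1 + n - k"
      using False t'(2) katona_far_start[OF t'(1) False] by (simp add: katona_offset_def)
    then have "fwd_dist n s0 t \<le> fwd_dist n s0 t'" "t \<noteq> t'"
      using j k_less by auto
    then have far: "fwd_dist n t t' = n - k - 1"
      using fwd_dist_diff[OF n] d j by arith
    then have "fwd_dist n t' t = k + 1"
      using fwd_dist_add_swap[OF n(2,3) \<open>t \<noteq> t'\<close>] k_less by arith
    moreover have "fwd_dist n t t' < k \<or> fwd_dist n t' t < k"
      using W(2) t t'(1) unfolding arcs_meet_def by blast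
    ultimately show ?thesis
      using far k_less by linarith
  qed
qed

lemma katona_near_dist_down:
  assumes "t \<in> W" "fwd_dist n s0 t < k" "i \<le> fwd_dist n s0 t"
  shows "\<exists>t'\<in>W. fwd_dist n s0 t' = i"
  using assms(3)
proof (induction rule: inc_induct)
  case base
  then show ?case
    using assms(1) by blast
next
  case (step i)
  then obtain t' where "t' \<in> W" "fwd_dist n s0 t' = Suc i"
    by blast
  then show ?case
    using katona_near_pred[of t'] step(2) assms(2) s0 fwd_dist_self[of n s0] by (cases i) fastforce+
qed

text \<open>Hence the near starts of \<open>W\<close> (distance less than \<open>k\<close> after \<open>s0\<close>) fill an initial
  segment \<open>s0, s0 + 1, ..., s0 + \<tau>\<close>, and the far starts come after \<open>s0 + \<tau> - k\<close>.\<close>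

lemma katona_near_before_far:
  assumes t: "t \<in> W" "\<not> fwd_dist n s0 t < k" and t': "t' \<in> W" "fwd_dist n s0 t' < k"
  shows "fwd_dist n s0 t' < fwd_dist n s0 t + k - n"
proof (rule ccontr)
  assume "\<not> ?thesis"
  then have le: "fwd_dist n s0 t + k - n \<le> fwd_dist n s0 t'"
    by simp
  then obtain u where u: "u \<in> W" "fwd_dist n s0 u = fwd_dist n s0 t + k - n"
    using katona_near_dist_down[OF t'] by blast
  then have "katona_offset n k s0 u = katona_offset n k s0 t"
    using t(2) t'(2) le by (simp add: katona_offset_def)
  then have "u = t"
    by (rule inj_onD[OF katona_offset_inj_on _ u(1) t(1)])
  then show False
    using t(2) t'(2) u(2) le by simp
qed

lemma katona_common_point: "\<exists>p<n. \<forall>t\<in>W. fwd_dist n t p < k"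
proof -
  let ?D = "{d. d < k \<and> (\<exists>t\<in>W. fwd_dist n s0 t = d)}"
  define \<tau> where "\<tau> = Max ?D"
  have "finite ?D"
    by (rule finite_subset[of _ "{..<k}"]) auto
  moreover have "?D \<noteq> {}"
    using s0 k fwd_dist_self[of n s0] by fastforce
  ultimately have "\<tau> \<in> ?D"
    unfolding \<tau>_def by (rule Max_in)
  then obtain t0 where t0: "t0 \<in> W" "fwd_dist n s0 t0 = \<tau>" "\<tau> < k"
    by auto
  have le_\<tau>: "fwd_dist n s0 t \<le> \<tau>" if "t \<in> W" "fwd_dist n s0 t < k" for t
    unfolding \<tau>_def using \<open>finite ?D\<close> that by (intro Max_ge) auto
  define p where "p = (if s0 + \<tau> < n then s0 + \<tau> else s0 + \<tau> - n)"
  have sn: "s0 < n"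
    using s0 W(1) by auto
  have p: "p < n" "fwd_dist n s0 p = \<tau>"
    using sn t0(3) k_less by (auto simp: p_def fwd_dist_def)
  have "fwd_dist n t p < k" if t: "t \<in> W" for t
  proof -
    have tn: "t < n"
      using t W(1) by auto
    show ?thesis
    proof (cases "fwd_dist n s0 t < k")
      case True
      then have "fwd_dist n t p = \<tau> - fwd_dist n s0 t"
        using le_\<tau>[OF t] fwd_dist_diff[OF sn tn p(1)] p(2) by simp
      then show ?thesis
        using t0(3) by simp
    next
      case False
      have "\<tau> < fwd_dist n s0 t + k - n"
        using katona_near_before_far[OF t False t0(1)] t0 by simp
      moreover have "n < fwd_dist n s0 t + k"
        using katona_far_start[OF t False] .
      ultimately have d: "fwd_dist n p t = fwd_dist n s0 t - \<tau>" and "p \<noteq> t"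
        using fwd_dist_diff[OF sn p(1) tn] p(2) k_less by auto
      then show ?thesis
        using fwd_dist_add_swap[OF p(1) tn] \<open>\<tau> < fwd_dist n s0 t + k - n\<close> fwd_dist_less[OF sn tn] by arith
    qed
  qed
  then show ?thesis
    using p(1) by blast
qed

end

end

lemma katona_card_le:
  assumes "1 \<le> k" "2 * k \<le> n" "W \<subseteq> {..<n}" "arcs_meet n k W"
  shows "card W \<le> k"
proof (cases "W = {}")
  case False
  then obtain s0 where "s0 \<in> W"
    by blast
  then have "card W \<le> card {..<k}"
    using katona_offset_inj_on[OF assms] katona_offset_image[OF assms] by (intro card_inj_on_le) auto
  then show ?thesis
    by simp
qed simp

lemma katona_card_eq:
  assumes k: "1 \<le> k" "2 * k < n" and W: "W \<subseteq> {..<n}" "arcs_meet n k W" "card W = k"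
  shows "\<exists>p<n. W = {s. s < n \<and> fwd_dist n s p < k}"
proof -
  obtain s0 where "s0 \<in> W"
    using W(3) k by fastforce
  then obtain p where p: "p < n" "\<forall>t\<in>W. fwd_dist n t p < k"
    using katona_common_point[of k n W s0] assms by force
  then have sub: "W \<subseteq> {s. s < n \<and> fwd_dist n s p < k}"
    using W(1) by auto
  have "card {s. s < n \<and> fwd_dist n s p < k} \<le> k"
    using k p(1) arcs_meet_through_point by (intro katona_card_le[of k n]) auto
  then have "W = {s. s < n \<and> fwd_dist n s p < k}"
    using sub W(3) by (intro card_seteq) auto
  then show ?thesis
    using p(1) by blast
qed

section \<open>Arrangements of \<open>{..<n}\<close> around a circle and their arcs\<close>

definition circ_interval :: "nat \<Rightarrow> nat \<Rightarrow> nat \<Rightarrow> nat set" where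
  "circ_interval n k s = {p. p < n \<and> fwd_dist n s p < k}"

definition arrangements :: "nat \<Rightarrow> nat list set" where
  "arrangements n = {xs. distinct xs \<and> set xs = {..<n}}"

definition arc :: "nat list \<Rightarrow> nat \<Rightarrow> nat \<Rightarrow> nat set" where
  "arc xs k s = (\<lambda>p. xs ! p) ` circ_interval (length xs) k s"

lemma card_circ_interval:
  assumes "k \<le> n" "s < n"
  shows "card (circ_interval n k s) = k"
proof -
  define f where "f i = (if s + i < n then s + i else s + i - n)" for i
  have "inj_on f {..<k}"
    using assms by (auto simp: f_def inj_on_def split: if_splits)
  moreover have "f ` {..<k} = circ_interval n k s"
  proof
    show "f ` {..<k} \<subseteq> circ_interval n k s"
      using assms by (auto simp: f_def circ_interval_def fwd_dist_def)
    show "circ_interval n k s \<subseteq> f ` {..<k}"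
    proof
      fix p assume "p \<in> circ_interval n k s"
      then have p: "p < n" "fwd_dist n s p < k"
        by (auto simp: circ_interval_def)
      then have "f (fwd_dist n s p) = p"
        using assms by (auto simp: f_def fwd_dist_def)
      then show "p \<in> f ` {..<k}"
        using p(2) by (metis imageI lessThan_iff)
    qed
  qed
  ultimately show ?thesis
    by (metis card_image card_lessThan)
qed

lemma card_starts_through_ge:
  assumes "k \<le> n" "q < n"
  shows "k \<le> card {s. s < n \<and> fwd_dist n s q < k}"
proof -
  define f where "f i = (if i \<le> q then q - i else q + n - i)" for i
  have "inj_on f {..<k}"
    using assms by (auto simp: f_def inj_on_def split: if_splits)
  moreover have "f ` {..<k} \<subseteq> {s. s < n \<and> fwd_dist n s q < k}"
    using assms by (auto simp: f_def fwd_dist_def)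
  ultimately show ?thesis
    using card_inj_on_le[of f "{..<k}"] by simp
qed

lemma length_arrangement: "xs \<in> arrangements n \<Longrightarrow> length xs = n"
  unfolding arrangements_def using distinct_card by fastforce

lemma finite_arrangements: "finite (arrangements n)"
proof -
  have "arrangements n \<subseteq> {xs. set xs \<subseteq> {..<n} \<and> length xs = n}"
    using length_arrangement by (auto simp: arrangements_def)
  then show ?thesis
    using finite_lists_length_eq[of "{..<n}" n] finite_subset by blast
qed

lemma upt_arrangement: "[0..<n] \<in> arrangements n"
  by (auto simp: arrangements_def)

lemma map_permutes_arrangement:
  "xs \<in> arrangements n \<Longrightarrow> \<pi> permutes {..<n} \<Longrightarrow> map \<pi> xs \<in> arrangements n"
  unfolding arrangements_def
  using permutes_image[of \<pi> "{..<n}"] permutes_inj_on[of \<pi> "{..<n}"]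
  by (auto simp: distinct_map inj_on_subset)

context
  fixes xs :: "nat list" and n :: nat
  assumes xs: "xs \<in> arrangements n"
begin

lemma arrangement_nth_eq_iff: "p < n \<Longrightarrow> q < n \<Longrightarrow> xs ! p = xs ! q \<longleftrightarrow> p = q"
  using xs length_arrangement[OF xs] by (auto simp: arrangements_def nth_eq_iff_index_eq)

lemma arrangement_nth_less: "p < n \<Longrightarrow> xs ! p < n"
  using xs length_arrangement[OF xs] nth_mem[of p xs] by (auto simp: arrangements_def)

lemma arrangement_position: "c < n \<Longrightarrow> \<exists>q<n. xs ! q = c"
  using xs length_arrangement[OF xs] by (auto simp: arrangements_def in_set_conv_nth)

lemma arc_subset: "arc xs k s \<subseteq> {..<n}"
  using length_arrangement[OF xs] arrangement_nth_less
  by (auto simp: arc_def circ_interval_def)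

lemma nth_mem_arc_iff: "q < n \<Longrightarrow> xs ! q \<in> arc xs k s \<longleftrightarrow> fwd_dist n s q < k"
  using length_arrangement[OF xs] arrangement_nth_eq_iff
  by (auto simp: arc_def circ_interval_def)

lemma card_arc: "k \<le> n \<Longrightarrow> s < n \<Longrightarrow> card (arc xs k s) = k"
  unfolding arc_def using length_arrangement[OF xs] card_circ_interval[of k n s] arrangement_nth_eq_iff
  by (subst card_image) (auto simp: inj_on_def circ_interval_def)

lemma arcs_meet_if_arcs_intersect:
  assumes "s < n" "t < n" "arc xs k s \<inter> arc xs k t \<noteq> {}"
  shows "fwd_dist n s t < k \<or> fwd_dist n t s < k"
proof -
  obtain c where "c \<in> arc xs k s" "c \<in> arc xs k t"
    using assms(3) by blast
  then obtain p where "p < n" "fwd_dist n s p < k" "fwd_dist n t p < k"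
    using length_arrangement[OF xs] arrangement_nth_eq_iff
    by (auto simp: arc_def circ_interval_def)
  then show ?thesis
    using fwd_dist_common_point assms(1,2) by blast
qed

lemma arc_inj:
  assumes "s < n" "t < n" "2 * k \<le> n" "1 \<le> k" "arc xs k s = arc xs k t"
  shows "s = t"
proof (rule ccontr)
  assume ne: "s \<noteq> t"
  have "fwd_dist n t s < k" "fwd_dist n s t < k"
    using nth_mem_arc_iff[of s k s] nth_mem_arc_iff[of s k t]
      nth_mem_arc_iff[of t k t] nth_mem_arc_iff[of t k s] assms by auto
  then show False
    using fwd_dist_add_swap[OF assms(1,2) ne] assms(3) by simp
qed

end

lemma arc_map: "arc (map \<pi> xs) k s = \<pi> ` arc xs k s"
  by (auto simp: arc_def circ_interval_def image_image)

lemma arc_append: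
  assumes "xs = L1 @ L2 @ L3" "length L1 = s" "length L2 = k"
  shows "arc xs k s = set L2"
proof -
  let ?xs = "L1 @ L2 @ L3"
  have "circ_interval (length ?xs) (length L2) (length L1) = {length L1..<length L1 + length L2}"
    by (auto simp: circ_interval_def fwd_dist_def)
  also have "\<dots> = (\<lambda>i. length L1 + i) ` {..<length L2}"
  proof (intro equalityI subsetI)
    fix x assume "x \<in> {length L1..<length L1 + length L2}"
    then show "x \<in> (\<lambda>i. length L1 + i) ` {..<length L2}"
      by (intro image_eqI[of _ _ "x - length L1"]) auto
  qed auto
  finally have "arc ?xs (length L2) (length L1) = (\<lambda>i. ?xs ! (length L1 + i)) ` {..<length L2}"
    by (simp add: arc_def image_image)
  also have "\<dots> = (!) L2 ` {0..<length L2}"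
    by (rule image_cong) (auto simp: nth_append)
  finally show ?thesis
    using assms by (simp add: nth_image)
qed

section \<open>Double counting over arrangements\<close>

lemma sum_card_incident:
  assumes "finite C" "finite X" "\<And>A. A \<in> X \<Longrightarrow> card {c\<in>C. A \<in> \<Phi> c} = N"
  shows "(\<Sum>c\<in>C. card (X \<inter> \<Phi> c)) = N * card X"
proof -
  have "(\<Sum>c\<in>C. card (X \<inter> \<Phi> c)) = (\<Sum>c\<in>C. \<Sum>A\<in>X. if A \<in> \<Phi> c then 1 else 0)"
    using assms(2) by (simp add: Int_def sum.inter_filter[symmetric])
  also have "\<dots> = (\<Sum>A\<in>X. \<Sum>c\<in>C. if A \<in> \<Phi> c then 1 else 0)"
    by (rule sum.swap)
  also have "\<dots> = (\<Sum>A\<in>X. card {c\<in>C. A \<in> \<Phi> c})"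
    using assms(1) by (simp add: sum.inter_filter[symmetric])
  also have "\<dots> = N * card X"
    using assms(3) by simp
  finally show ?thesis .
qed

lemma double_counting_card_le:
  assumes fin: "finite C" "finite F" "finite G"
    and N: "\<And>A. A \<in> F \<union> G \<Longrightarrow> card {c\<in>C. A \<in> \<Phi> c} = N" "0 < N"
    and le: "\<And>c. c \<in> C \<Longrightarrow> card (F \<inter> \<Phi> c) \<le> card (G \<inter> \<Phi> c)"
  shows "card F \<le> card G"
    and "card F = card G \<Longrightarrow> c \<in> C \<Longrightarrow> card (F \<inter> \<Phi> c) = card (G \<inter> \<Phi> c)"
proof -
  have sums: "(\<Sum>c\<in>C. card (F \<inter> \<Phi> c)) = N * card F" "(\<Sum>c\<in>C. card (G \<inter> \<Phi> c)) = N * card G"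
    using sum_card_incident[OF fin(1,2)] sum_card_incident[OF fin(1,3)] N(1) by auto
  have "(\<Sum>c\<in>C. card (F \<inter> \<Phi> c)) \<le> (\<Sum>c\<in>C. card (G \<inter> \<Phi> c))"
    using le by (rule sum_mono)
  then show "card F \<le> card G"
    using sums N(2) by simp
  assume eq: "card F = card G" and c: "c \<in> C"
  show "card (F \<inter> \<Phi> c) = card (G \<inter> \<Phi> c)"
  proof (rule ccontr)
    assume "card (F \<inter> \<Phi> c) \<noteq> card (G \<inter> \<Phi> c)"
    then have "card (F \<inter> \<Phi> c) < card (G \<inter> \<Phi> c)"
      using le[OF c] by simp
    then have "(\<Sum>c\<in>C. card (F \<inter> \<Phi> c)) < (\<Sum>c\<in>C. card (G \<inter> \<Phi> c))"
      using le fin(1) c by (intro sum_strict_mono_ex1) auto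
    then show False
      using sums eq by simp
  qed
qed

lemma permutes_extending_bij:
  assumes "finite X" "A \<subseteq> X" "B \<subseteq> X" "bij_betw f A B"
  obtains \<pi> where "\<pi> permutes X" "\<And>a. a \<in> A \<Longrightarrow> \<pi> a = f a"
proof -
  have "card (X - A) = card (X - B)"
    using assms bij_betw_same_card[OF assms(4)] by (simp add: card_Diff_subset finite_subset)
  then obtain g where g: "bij_betw g (X - A) (X - B)"
    using finite_same_card_bij[of "X - A" "X - B"] assms(1) by blast
  define \<pi> where "\<pi> x = (if x \<in> A then f x else if x \<in> X then g x else x)" for x
  have "bij_betw \<pi> A B"
    using assms(4) by (rule bij_betw_cong[THEN iffD1, rotated]) (simp add: \<pi>_def)
  moreover have "bij_betw \<pi> (X - A) (X - B)"
    using g by (rule bij_betw_cong[THEN iffD1, rotated]) (simp add: \<pi>_def)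
  ultimately have "bij_betw \<pi> (A \<union> (X - A)) (B \<union> (X - B))"
    by (rule bij_betw_combine) auto
  then have "bij_betw \<pi> X X"
    using assms(2,3) by (simp add: Un_absorb1 Un_Diff_cancel)
  then have "\<pi> permutes X"
    by (rule bij_imp_permutes) (use assms(2) in \<open>auto simp: \<pi>_def\<close>)
  then show ?thesis
    using that by (auto simp: \<pi>_def)
qed

lemma card_arrangements_incident_le:
  assumes \<pi>: "\<pi> permutes {..<n}"
    and \<Phi>: "\<And>xs. xs \<in> arrangements n \<Longrightarrow> A \<in> \<Phi> xs \<Longrightarrow> B \<in> \<Phi> (map \<pi> xs)"
  shows "card {xs\<in>arrangements n. A \<in> \<Phi> xs} \<le> card {xs\<in>arrangements n. B \<in> \<Phi> xs}"
proof (rule card_inj_on_le)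
  show "inj_on (map \<pi>) {xs\<in>arrangements n. A \<in> \<Phi> xs}"
    using permutes_inj[OF \<pi>] by (auto simp: inj_on_def inj_map_eq_map)
  show "map \<pi> ` {xs\<in>arrangements n. A \<in> \<Phi> xs} \<subseteq> {xs\<in>arrangements n. B \<in> \<Phi> xs}"
    using map_permutes_arrangement[OF _ \<pi>] \<Phi> by auto
qed (simp add: finite_arrangements)

lemma card_arrangements_incident_eq:
  assumes \<Phi>: "\<And>\<sigma> xs B. B \<in> \<Phi> xs \<Longrightarrow> map_sum \<sigma> \<sigma> ` B \<in> \<Phi> (map \<sigma> xs)"
    and \<pi>: "\<pi> permutes {..<n}" and A': "A' = map_sum \<pi> \<pi> ` A"
  shows "card {xs\<in>arrangements n. A \<in> \<Phi> xs} = card {xs\<in>arrangements n. A' \<in> \<Phi> xs}"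
proof (rule antisym)
  show "card {xs\<in>arrangements n. A \<in> \<Phi> xs} \<le> card {xs\<in>arrangements n. A' \<in> \<Phi> xs}"
    using \<Phi> A' by (intro card_arrangements_incident_le[OF \<pi>]) simp
  have "map_sum (inv \<pi>) (inv \<pi>) (map_sum \<pi> \<pi> v) = v" for v
    by (cases v) (simp_all add: permutes_inverses(2)[OF \<pi>])
  then have "A = map_sum (inv \<pi>) (inv \<pi>) ` A'"
    using A' by (simp add: image_image)
  then show "card {xs\<in>arrangements n. A' \<in> \<Phi> xs} \<le> card {xs\<in>arrangements n. A \<in> \<Phi> xs}"
    using \<Phi> by (intro card_arrangements_incident_le[OF permutes_inv[OF \<pi>]]) simp
qed

text \<open>Katona's averaging argument, with \<open>\<Phi> xs\<close> the circle family of the arrangement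
  \<open>xs\<close>: blocks in one orbit of the relabellings lie in equally many circle families.\<close>

lemma arrangement_averaging:
  assumes \<Phi>: "\<And>\<sigma> xs B. B \<in> \<Phi> xs \<Longrightarrow> map_sum \<sigma> \<sigma> ` B \<in> \<Phi> (map \<sigma> xs)"
    and orbit: "\<And>A. A \<in> F \<union> G \<Longrightarrow> \<exists>\<pi>. \<pi> permutes {..<n} \<and> A = map_sum \<pi> \<pi> ` A0"
    and A0: "ys \<in> arrangements n" "A0 \<in> \<Phi> ys"
    and fin: "finite F" "finite G"
    and le: "\<And>xs. xs \<in> arrangements n \<Longrightarrow> card (F \<inter> \<Phi> xs) \<le> card (G \<inter> \<Phi> xs)"
  shows "card F \<le> card G"
    and "card F = card G \<Longrightarrow> xs \<in> arrangements n \<Longrightarrow> card (F \<inter> \<Phi> xs) = card (G \<inter> \<Phi> xs)"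
proof -
  define N where "N = card {xs\<in>arrangements n. A0 \<in> \<Phi> xs}"
  have N: "card {xs\<in>arrangements n. A \<in> \<Phi> xs} = N" if A: "A \<in> F \<union> G" for A
  proof -
    obtain \<pi> where \<pi>: "\<pi> permutes {..<n}" "A = map_sum \<pi> \<pi> ` A0"
      using orbit[OF A] by blast
    show ?thesis
      unfolding N_def by (rule card_arrangements_incident_eq[OF \<Phi> \<pi>, symmetric])
  qed
  have "0 < N"
    using A0 finite_arrangements by (auto simp: N_def card_gt_0_iff)
  note counting = double_counting_card_le[OF finite_arrangements fin N \<open>0 < N\<close> le]
  show "card F \<le> card G"
    by (rule counting(1))
  show "card F = card G \<Longrightarrow> xs \<in> arrangements n \<Longrightarrow> card (F \<inter> \<Phi> xs) = card (G \<inter> \<Phi> xs)"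
    by (rule counting(2))
qed

section \<open>Families that are stars on every arrangement\<close>

lemma obtain_subset_avoiding:
  assumes "D \<subseteq> {..<n}" "card D + m \<le> n"
  obtains R where "R \<subseteq> {..<n}" "card R = m" "R \<inter> D = {}"
proof -
  have "card ({..<n} - D) = n - card D"
    using assms(1) by (simp add: card_Diff_subset finite_subset)
  then have "m \<le> card ({..<n} - D)"
    using assms(2) by simp
  then obtain R where "R \<subseteq> {..<n} - D" "card R = m"
    by (meson obtain_subset_with_card_n)
  then show ?thesis
    using that by blast
qed

definition circle_star_family :: "nat \<Rightarrow> nat \<Rightarrow> nat set set \<Rightarrow> bool" where
  "circle_star_family n r H \<longleftrightarrow>
     (\<forall>xs\<in>arrangements n. \<exists>p<n. \<forall>s<n. arc xs r s \<in> H \<longleftrightarrow> fwd_dist n s p < r)"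

definition switch :: "nat \<Rightarrow> nat \<Rightarrow> nat set set \<Rightarrow> nat \<Rightarrow> nat \<Rightarrow> nat set \<Rightarrow> bool" where
  "switch n r H x y Q \<longleftrightarrow> x < n \<and> y < n \<and> Q \<subseteq> {..<n} \<and> x \<notin> Q \<and> y \<notin> Q \<and> card Q = r - 1
     \<and> insert x Q \<in> H \<and> insert y Q \<notin> H"

text \<open>The arrangement \<open>Z0, A, x, B, Q - B, y, Rest\<close> with \<open>A = T - Q - {x}\<close> and \<open>B = T \<inter> Q\<close>:
  the padding \<open>Z0\<close> of size \<open>r - |A|\<close> puts \<open>x\<close> at position \<open>r\<close>, and \<open>T\<close> is the arc
  starting at \<open>r - |A|\<close>.\<close>

lemma arrangement_with_switch:
  assumes r: "1 \<le> r" "2 * r < n"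
    and Q: "x < n" "y < n" "Q \<subseteq> {..<n}" "x \<notin> Q" "y \<notin> Q" "card Q = r - 1"
    and T: "T \<subseteq> {..<n}" "card T = r" "x \<in> T" "y \<notin> T"
  obtains xs a where "xs \<in> arrangements n" "a < r" "arc xs r r = insert x Q"
    "arc xs r (r + 1) = insert y Q" "arc xs r (r - a) = T"
proof -
  define A where "A = T - Q - {x}"
  define B where "B = T \<inter> Q"
  have "finite Q" "finite T"
    using Q(3) T(1) finite_subset by auto
  then have fin: "finite Q" "finite A" "finite B"
    by (simp_all add: A_def B_def)
  have T_eq: "T = insert x (A \<union> B)" and x_notin: "x \<notin> A \<union> B"
    using T Q(4) by (auto simp: A_def B_def)
  have "card (A \<union> B) = card A + card B"
    using fin by (intro card_Un_disjoint) (auto simp: A_def B_def)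
  then have cAB: "card A + card B = r - 1"
    using T(2) T_eq x_notin fin by (metis card_insert_disjoint diff_Suc_1 finite_UnI)
  have cQB: "card (Q - B) = r - 1 - card B"
    using Q(6) fin by (subst card_Diff_subset) (auto simp: B_def)
  define Y where "Y = insert x (insert y (Q \<union> A))"
  have "card (Q \<union> A) = card Q + card A"
    using fin by (intro card_Un_disjoint) (auto simp: A_def)
  moreover have "y \<notin> Q \<union> A" "x \<notin> insert y (Q \<union> A)"
    using Q T by (auto simp: A_def)
  ultimately have Y: "Y \<subseteq> {..<n}" "card Y = r + 1 + card A"
    using Q T fin r(1) by (auto simp: Y_def A_def)
  have "card Y + (r - card A) \<le> n"
    using Y(2) cAB r by linarith
  then obtain Z0 where Z0: "Z0 \<subseteq> {..<n}" "card Z0 = r - card A" "Z0 \<inter> Y = {}"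
    by (rule obtain_subset_avoiding[OF Y(1)])
  define Rest where "Rest = {..<n} - Y - Z0"
  define sl where "sl = (sorted_list_of_set :: nat set \<Rightarrow> nat list)"
  define xs where "xs = sl Z0 @ sl A @ [x] @ sl B @ sl (Q - B) @ [y] @ sl Rest"
  have len: "length (sl Z0) = r - card A" "length (sl A) = card A" "length (sl B) = card B"
    "length (sl (Q - B)) = r - 1 - card B"
    using Z0 cQB by (simp_all add: sl_def)
  have fin_Z0: "finite Z0"
    using Z0(1) by (meson finite_lessThan finite_subset)
  have "distinct xs"
    using fin fin_Z0 Z0(3) Q(4,5) T(3,4) unfolding xs_def sl_def Rest_def Y_def
    by (auto simp: A_def B_def)
  moreover have "set xs = {..<n}"
    using fin fin_Z0 Y(1) Z0(1) unfolding xs_def sl_def Rest_def Y_def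
    by (auto simp: A_def B_def)
  ultimately have "xs \<in> arrangements n"
    by (simp add: arrangements_def)
  moreover have "arc xs r r = insert x Q"
    using len cAB fin r(1)
    by (subst arc_append[of xs "sl Z0 @ sl A" "[x] @ sl B @ sl (Q - B)" "[y] @ sl Rest"])
      (auto simp: xs_def sl_def B_def)
  moreover have "arc xs r (r + 1) = insert y Q"
    using len cAB fin r(1)
    by (subst arc_append[of xs "sl Z0 @ sl A @ [x]" "sl B @ sl (Q - B) @ [y]" "sl Rest"])
      (auto simp: xs_def sl_def B_def)
  moreover have "arc xs r (r - card A) = T"
    using len cAB fin r(1) T_eq
    by (subst arc_append[of xs "sl Z0" "sl A @ [x] @ sl B" "sl (Q - B) @ [y] @ sl Rest"])
      (auto simp: xs_def sl_def)
  moreover have "card A < r"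
    using cAB r(1) by simp
  ultimately show ?thesis
    using that by blast
qed

lemma swap_closed_family_complete:
  assumes X: "finite X" and H: "\<forall>S\<in>H. S \<subseteq> X \<and> card S = r" "S0 \<in> H"
    and swap: "\<And>S x y. S \<in> H \<Longrightarrow> x \<in> S \<Longrightarrow> y \<in> X \<Longrightarrow> y \<notin> S \<Longrightarrow> insert y (S - {x}) \<in> H"
    and T: "T \<subseteq> X" "card T = r"
  shows "T \<in> H"
proof -
  have fin_T: "finite T"
    using T(1) X by (rule finite_subset)
  have "T \<in> H" if "S \<in> H" "card (S - T) = d" for S d
    using that
  proof (induction d arbitrary: S)
    case 0
    have S: "S \<subseteq> X" "card S = r"
      using H(1) "0.prems"(1) by auto
    then have "finite S"
      using X finite_subset by auto
    then have "S \<subseteq> T"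
      using "0.prems"(2) by simp
    then have "S = T"
      using card_subset_eq[OF fin_T] S(2) T(2) by simp
    then show ?case
      using "0.prems"(1) by simp
  next
    case (Suc d)
    have S: "S \<subseteq> X" "card S = r"
      using H(1) Suc.prems(1) by auto
    then have fin_S: "finite S"
      using X finite_subset by auto
    have "S - T \<noteq> {}"
      using Suc.prems(2) by (metis card.empty nat.distinct(1))
    then obtain x where x: "x \<in> S - T"
      by blast
    have "card (T - S) = card (S - T)"
      using S T fin_S fin_T by (simp add: card_Diff_subset_Int Int_commute)
    then have "T - S \<noteq> {}"
      using Suc.prems(2) by (metis card.empty nat.distinct(1))
    then obtain y where y: "y \<in> T - S"
      by blast
    have "insert y (S - {x}) \<in> H"
      using swap[OF Suc.prems(1)] x y T(1) by auto
    moreover have "insert y (S - {x}) - T = (S - T) - {x}"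
      using y by auto
    then have "card (insert y (S - {x}) - T) = d"
      using Suc.prems(2) x fin_S by simp
    ultimately show ?case
      by (rule Suc.IH)
  qed
  then show ?thesis
    using H(2) by blast
qed

context
  fixes n r :: nat and H :: "nat set set"
  assumes r: "1 \<le> r" "2 * r < n"
    and H: "\<forall>S\<in>H. S \<subseteq> {..<n} \<and> card S = r" "intersecting H" "circle_star_family n r H"
begin

lemma arc_mem_if_switch_at:
  assumes xs: "xs \<in> arrangements n" and sw: "arc xs r r \<in> H" "arc xs r (r + 1) \<notin> H"
    and a: "a < r"
  shows "arc xs r (r - a) \<in> H"
proof -
  obtain p where p: "p < n" "\<And>s. s < n \<Longrightarrow> arc xs r s \<in> H \<longleftrightarrow> fwd_dist n s p < r"
    using H(3) xs unfolding circle_star_family_def by blast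
  have "fwd_dist n r p < r" "\<not> fwd_dist n (r + 1) p < r"
    using p(2)[of r] p(2)[of "r + 1"] sw r by auto
  then have "p = r"
    using p(1) r by (auto simp: fwd_dist_def split: if_splits)
  moreover have "fwd_dist n (r - a) r < r"
    using a r by (simp add: fwd_dist_def)
  ultimately show ?thesis
    using p(2)[of "r - a"] r by simp
qed

lemma mem_if_switch_avoiding:
  assumes sw: "switch n r H x y Q" and T: "T \<subseteq> {..<n}" "card T = r" "x \<in> T" "y \<notin> T"
  shows "T \<in> H"
proof -
  have "x < n" "y < n" "Q \<subseteq> {..<n}" "x \<notin> Q" "y \<notin> Q" "card Q = r - 1"
    using sw by (simp_all add: switch_def)
  then obtain xs a where "xs \<in> arrangements n" "a < r" "arc xs r r = insert x Q"
    "arc xs r (r + 1) = insert y Q" "arc xs r (r - a) = T"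
    using arrangement_with_switch[OF r _ _ _ _ _ _ T] by metis
  then show ?thesis
    using arc_mem_if_switch_at[of xs a] sw by (simp add: switch_def)
qed

text \<open>If \<open>y \<in> T\<close>, a third point \<open>z \<notin> T\<close> and two disjoint \<open>(r - 1)\<close>-sets \<open>R\<close>, \<open>R'\<close>
  avoiding \<open>x, y, z\<close> give a new switch \<open>(x, z, R)\<close> with \<open>z \<notin> T\<close>: \<open>insert z R\<close> misses
  \<open>insert x R' \<in> H\<close>.\<close>

lemma mem_if_switch:
  assumes sw: "switch n r H x y Q" and T: "T \<subseteq> {..<n}" "card T = r" "x \<in> T"
  shows "T \<in> H"
proof (cases "y \<in> T")
  case False
  then show ?thesis
    using mem_if_switch_avoiding[OF sw T] by blast
next
  case True
  have xy: "x < n" "y < n" "x \<noteq> y"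
    using sw by (auto simp: switch_def)
  have "\<not> {..<n} \<subseteq> T"
  proof
    assume "{..<n} \<subseteq> T"
    then have "card {..<n} \<le> card T"
      using T(1) by (intro card_mono) (auto intro: finite_subset)
    then show False
      using T(2) r by simp
  qed
  then obtain z where z: "z < n" "z \<notin> T"
    by auto
  have xyz: "{x, y, z} \<subseteq> {..<n}" "card {x, y, z} \<le> 3"
    using xy z by (auto simp: card_insert_if)
  have "card {x, y, z} + (r - 1) \<le> n"
    using xyz(2) r by linarith
  then obtain R where R: "R \<subseteq> {..<n}" "card R = r - 1" "R \<inter> {x, y, z} = {}"
    by (rule obtain_subset_avoiding[OF xyz(1)])
  have "{x, y, z} \<union> R \<subseteq> {..<n}"
    using xyz(1) R(1) by blast
  moreover have "card ({x, y, z} \<union> R) + (r - 1) \<le> n"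
    using xyz(2) R(2) r card_Un_le[of "{x, y, z}" R] by linarith
  ultimately obtain R' where R': "R' \<subseteq> {..<n}" "card R' = r - 1" "R' \<inter> ({x, y, z} \<union> R) = {}"
    by (rule obtain_subset_avoiding)
  have fin: "finite R" "finite R'"
    using R(1) R'(1) finite_subset by auto
  have in_R: "insert x R \<in> H"
    using R fin r xy by (intro mem_if_switch_avoiding[OF sw]) auto
  have in_R': "insert x R' \<in> H"
    using R' fin r xy by (intro mem_if_switch_avoiding[OF sw]) auto
  have "insert z R \<inter> insert x R' = {}"
    using R R' z True T(3) by auto
  then have "insert z R \<notin> H"
    using intersectingD[OF H(2) _ in_R'] by blast
  then have "switch n r H x z R"
    using R in_R xy z by (auto simp: switch_def)
  then show ?thesis
    using mem_if_switch_avoiding T z(2) by blast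
qed

lemma switch_exists:
  assumes "H \<noteq> {}"
  shows "\<exists>x y Q. switch n r H x y Q"
proof -
  obtain S0 where S0: "S0 \<in> H"
    using assms by blast
  then have "S0 \<subseteq> {..<n}" "card S0 = r"
    using H(1) by auto
  then obtain T0 where T0: "T0 \<subseteq> {..<n}" "card T0 = r" "T0 \<inter> S0 = {}"
    using obtain_subset_avoiding[of S0 n r] r by auto
  then have "T0 \<notin> H"
    using intersectingD[OF H(2) S0] by blast
  then obtain S x y where S: "S \<in> H" "x \<in> S" "y \<in> {..<n}" "y \<notin> S" "insert y (S - {x}) \<notin> H"
    using swap_closed_family_complete[OF finite_lessThan H(1) S0 _ T0(1,2)] by blast
  then have "S \<subseteq> {..<n}" "card S = r" "finite S"
    using H(1) finite_subset[of S "{..<n}"] by auto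
  then have "switch n r H x y (S - {x})"
    using S by (auto simp: switch_def insert_absorb)
  then show ?thesis
    by blast
qed

theorem circle_star_family_is_star:
  assumes "H \<noteq> {}"
  obtains x where "x < n" "\<And>T. T \<subseteq> {..<n} \<Longrightarrow> card T = r \<Longrightarrow> x \<in> T \<Longrightarrow> T \<in> H"
proof -
  obtain x y Q where sw: "switch n r H x y Q"
    using switch_exists[OF assms] by blast
  then have "x < n"
    by (simp add: switch_def)
  then show ?thesis
    using that mem_if_switch[OF sw] by blast
qed

end

section \<open>Independent sets of the pendant complete graph\<close>

abbreviation Kstar_V :: "nat \<Rightarrow> (nat + nat) set" where
  "Kstar_V n \<equiv> pendant_V (K_V n)"

abbreviation Kstar_E :: "nat + nat \<Rightarrow> nat + nat \<Rightarrow> bool" where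
  "Kstar_E \<equiv> pendant_E K_E"

abbreviation Kstar_indep :: "nat \<Rightarrow> nat \<Rightarrow> (nat + nat) set set" where
  "Kstar_indep n r \<equiv> indep_rsets (Kstar_V n) Kstar_E r"

abbreviation Kstar_star :: "nat \<Rightarrow> nat \<Rightarrow> nat + nat \<Rightarrow> (nat + nat) set set" where
  "Kstar_star n r v \<equiv> indep_star (Kstar_V n) Kstar_E r v"

lemma Kstar_star_subset: "Kstar_star n r v \<subseteq> Kstar_indep n r"
  by (rule indep_star_subset)

lemma Kstar_V_eq: "Kstar_V n = Inl ` {..<n} \<union> Inr ` {..<n}"
  by (simp add: pendant_V_def K_V_def)

lemma finite_Kstar_indep: "finite (Kstar_indep n r)"
proof (rule finite_subset)
  show "Kstar_indep n r \<subseteq> Pow (Kstar_V n)"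
    by (auto simp: indep_rsets_def)
qed (simp add: Kstar_V_eq)

lemma finite_Kstar_family: "F \<subseteq> Kstar_indep n r \<Longrightarrow> finite F"
  using finite_Kstar_indep by (rule finite_subset[rotated])

lemma card_insert_Inl_Inr: "finite P \<Longrightarrow> card (insert (Inl m) (Inr ` P)) = Suc (card P)"
  by (subst card_insert_disjoint) (auto simp: card_image)

lemma pendant_set_in_Kstar_indep:
  "S \<subseteq> {..<n} \<Longrightarrow> card S = r \<Longrightarrow> Inr ` S \<in> Kstar_indep n r"
  by (auto simp: indep_rsets_def Kstar_V_eq card_image finite_subset)

lemma pendant_set_in_Kstar_indepD:
  "Inr ` S \<in> Kstar_indep n r \<Longrightarrow> S \<subseteq> {..<n} \<and> card S = r"
  by (auto simp: indep_rsets_def Kstar_V_eq card_image)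

lemma mixed_set_in_Kstar_indep:
  assumes "1 \<le> r" "m < n" "P \<subseteq> {..<n}" "m \<notin> P" "card P = r - 1"
  shows "insert (Inl m) (Inr ` P) \<in> Kstar_indep n r"
proof -
  have "finite P"
    using assms(3) finite_subset by auto
  then have "card (insert (Inl m) (Inr ` P)) = r"
    using assms(1,5) by (simp add: card_insert_Inl_Inr)
  then show ?thesis
    using assms \<open>finite P\<close> by (auto simp: indep_rsets_def Kstar_V_eq K_E_def)
qed

lemma Kstar_indep_cases:
  assumes "A \<in> Kstar_indep n r"
  obtains (pendant) S where "S \<subseteq> {..<n}" "card S = r" "A = Inr ` S"
  | (mixed) m P where "m < n" "P \<subseteq> {..<n}" "m \<notin> P" "card P = r - 1" "A = insert (Inl m) (Inr ` P)"
proof -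
  have A: "A \<subseteq> Inl ` {..<n} \<union> Inr ` {..<n}" "finite A" "card A = r"
    and ind: "\<And>u v. u \<in> A \<Longrightarrow> v \<in> A \<Longrightarrow> \<not> pendant_E K_E u v"
    using assms by (auto simp: indep_rsets_def Kstar_V_eq)
  define L where "L = {m. Inl m \<in> A}"
  define P where "P = {i. Inr i \<in> A}"
  have A_eq: "A = Inl ` L \<union> Inr ` P"
  proof (intro equalityI subsetI)
    fix v assume "v \<in> A"
    then show "v \<in> Inl ` L \<union> Inr ` P"
      by (cases v) (auto simp: L_def P_def)
  qed (auto simp: L_def P_def)
  have P: "P \<subseteq> {..<n}"
    using A(1) by (auto simp: P_def)
  then have fin_P: "finite P"
    by (meson finite_lessThan finite_subset)
  show ?thesis
  proof (cases "L = {}")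
    case True
    then have "A = Inr ` P"
      using A_eq by simp
    then show ?thesis
      using pendant[OF P] A(3) by (simp add: card_image)
  next
    case False
    then obtain m where m: "Inl m \<in> A"
      by (auto simp: L_def)
    have "L = {m}"
    proof (intro equalityI subsetI)
      fix m' assume "m' \<in> L"
      then have "\<not> pendant_E K_E (Inl m) (Inl m')"
        using ind[of "Inl m" "Inl m'"] m by (simp add: L_def)
      then show "m' \<in> {m}"
        by (simp add: K_E_def)
    qed (use m in \<open>simp add: L_def\<close>)
    then have A_eq': "A = insert (Inl m) (Inr ` P)"
      using A_eq by simp
    have "m \<notin> P"
      using ind[of "Inl m" "Inr m"] m by (auto simp: P_def)
    moreover have "m < n"
      using A(1) m by auto
    moreover have "card P = r - 1"
      using A(3) fin_P unfolding A_eq' by (simp add: card_insert_Inl_Inr)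
    ultimately show ?thesis
      using mixed P A_eq' by blast
  qed
qed

lemma insert_Inl_Inr_eq_iff:
  "insert (Inl m) (Inr ` P) = insert (Inl m') (Inr ` P') \<longleftrightarrow> m = m' \<and> P = P'"
proof
  assume eq: "insert (Inl m) (Inr ` P) = insert (Inl m') (Inr ` P')"
  have "P = {i. Inr i \<in> insert (Inl m) (Inr ` P)}" "P' = {i. Inr i \<in> insert (Inl m') (Inr ` P')}"
    by auto
  then show "m = m' \<and> P = P'"
    using eq by (metis insert_iff sum.inject(1) Inl_Inr_False imageE)
qed simp


lemma Kstar_pendant_orbit:
  assumes "A \<in> Kstar_indep n r" "A' \<in> Kstar_indep n r" "A \<subseteq> range Inr" "A' \<subseteq> range Inr"
  shows "\<exists>\<pi>. \<pi> permutes {..<n} \<and> A' = map_sum \<pi> \<pi> ` A"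
proof -
  obtain S S' where S: "S \<subseteq> {..<n}" "card S = r" "A = Inr ` S"
    and S': "S' \<subseteq> {..<n}" "card S' = r" "A' = Inr ` S'"
    using assms by (elim Kstar_indep_cases) auto
  have "finite S" "finite S'"
    using S(1) S'(1) finite_subset by auto
  then obtain f where "bij_betw f S S'"
    using finite_same_card_bij S(2) S'(2) by metis
  then obtain \<pi> where \<pi>: "\<pi> permutes {..<n}" "\<And>a. a \<in> S \<Longrightarrow> \<pi> a = f a"
    using permutes_extending_bij[OF _ S(1) S'(1)] by blast
  then have "\<pi> ` S = S'"
    using \<open>bij_betw f S S'\<close> by (simp add: bij_betw_def cong: image_cong)
  then have "A' = map_sum \<pi> \<pi> ` A"
    unfolding S(3) S'(3) by (auto simp: image_image)
  then show ?thesis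
    using \<pi>(1) by blast
qed

lemma Kstar_mixed_orbit:
  assumes "A \<in> Kstar_indep n r" "A' \<in> Kstar_indep n r" "\<not> A \<subseteq> range Inr" "\<not> A' \<subseteq> range Inr"
  shows "\<exists>\<pi>. \<pi> permutes {..<n} \<and> A' = map_sum \<pi> \<pi> ` A"
proof -
  obtain m P m' P' where P: "m < n" "P \<subseteq> {..<n}" "m \<notin> P" "card P = r - 1" "A = insert (Inl m) (Inr ` P)"
    and P': "m' < n" "P' \<subseteq> {..<n}" "m' \<notin> P'" "card P' = r - 1" "A' = insert (Inl m') (Inr ` P')"
    using assms by (elim Kstar_indep_cases) auto
  have "finite P" "finite P'"
    using P(2) P'(2) finite_subset by auto
  then obtain g where g: "bij_betw g P P'"
    using finite_same_card_bij P(4) P'(4) by metis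
  define f where "f x = (if x = m then m' else g x)" for x
  have "bij_betw f P P'"
    using g by (rule bij_betw_cong[THEN iffD1, rotated]) (use P(3) in \<open>auto simp: f_def\<close>)
  then have "bij_betw f (P \<union> {m}) (P' \<union> {m'})"
    using notIn_Un_bij_betw[of m P f P'] P(3) P'(3) by (simp add: f_def)
  then obtain \<pi> where \<pi>: "\<pi> permutes {..<n}" "\<And>a. a \<in> P \<union> {m} \<Longrightarrow> \<pi> a = f a"
    using permutes_extending_bij[of "{..<n}" "P \<union> {m}" "P' \<union> {m'}"] P P' by auto
  have "\<pi> m = m'" "\<pi> ` P = P'"
    using \<pi>(2) g P(3) by (auto simp: f_def bij_betw_def cong: image_cong)
  then have "A' = map_sum \<pi> \<pi> ` A"
    unfolding P(5) P'(5) by (auto simp: image_image)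
  then show ?thesis
    using \<pi>(1) by blast
qed

section \<open>Katona's circles in the pendant complete graph\<close>

definition circ_pred :: "nat \<Rightarrow> nat \<Rightarrow> nat" where
  "circ_pred n s = (if s = 0 then n - 1 else s - 1)"

lemma circ_pred_less: "s < n \<Longrightarrow> circ_pred n s < n"
  by (auto simp: circ_pred_def)

lemma circ_pred_inj: "s < n \<Longrightarrow> t < n \<Longrightarrow> circ_pred n s = circ_pred n t \<Longrightarrow> s = t"
  by (auto simp: circ_pred_def split: if_splits)

lemma fwd_dist_circ_pred: "s < n \<Longrightarrow> fwd_dist n s (circ_pred n s) = n - 1"
  by (auto simp: circ_pred_def fwd_dist_def)

definition pendant_arcs :: "nat \<Rightarrow> nat list \<Rightarrow> (nat + nat) set set" where
  "pendant_arcs r xs = (\<lambda>s. Inr ` arc xs r s) ` {..<length xs}"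

definition mixed_arc :: "nat \<Rightarrow> nat list \<Rightarrow> nat \<Rightarrow> (nat + nat) set" where
  "mixed_arc r xs s = insert (Inl (xs ! circ_pred (length xs) s)) (Inr ` arc xs (r - 1) s)"

definition mixed_arcs :: "nat \<Rightarrow> nat list \<Rightarrow> (nat + nat) set set" where
  "mixed_arcs r xs = mixed_arc r xs ` {..<length xs}"

lemma pendant_arcs_subset_range: "B \<in> pendant_arcs r xs \<Longrightarrow> B \<subseteq> range Inr"
  by (auto simp: pendant_arcs_def)

lemma pendant_arcs_map: "B \<in> pendant_arcs r xs \<Longrightarrow> map_sum \<pi> \<pi> ` B \<in> pendant_arcs r (map \<pi> xs)"
  by (auto simp: pendant_arcs_def arc_map image_image)

lemma mixed_arcs_map: "B \<in> mixed_arcs r xs \<Longrightarrow> map_sum \<pi> \<pi> ` B \<in> mixed_arcs r (map \<pi> xs)"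
  by (auto simp: mixed_arcs_def mixed_arc_def arc_map image_image circ_pred_less)

context
  fixes n r :: nat and xs :: "nat list"
  assumes xs: "xs \<in> arrangements n"
begin

lemma pendant_arc_in_Kstar_indep:
  assumes "r \<le> n" "B \<in> pendant_arcs r xs"
  shows "B \<in> Kstar_indep n r"
  using assms pendant_set_in_Kstar_indep[OF arc_subset[OF xs] card_arc[OF xs]]
  by (auto simp: pendant_arcs_def length_arrangement[OF xs])

lemma mixed_arc_in_Kstar_indep:
  assumes "1 \<le> r" "r \<le> n" "s < n"
  shows "mixed_arc r xs s \<in> Kstar_indep n r" "\<not> mixed_arc r xs s \<subseteq> range Inr"
proof -
  have pred: "circ_pred n s < n"
    using assms(3) by (rule circ_pred_less)
  have "xs ! circ_pred n s \<notin> arc xs (r - 1) s"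
    using nth_mem_arc_iff[OF xs pred] fwd_dist_circ_pred[OF assms(3)] assms by simp
  moreover have "card (arc xs (r - 1) s) = r - 1"
    using card_arc[OF xs, of "r - 1" s] assms by simp
  ultimately show "mixed_arc r xs s \<in> Kstar_indep n r"
    unfolding mixed_arc_def length_arrangement[OF xs]
    using assms(1) arrangement_nth_less[OF xs pred] arc_subset[OF xs]
    by (intro mixed_set_in_Kstar_indep)
  show "\<not> mixed_arc r xs s \<subseteq> range Inr"
    by (auto simp: mixed_arc_def)
qed

lemma arcs_meet_pendant_starts:
  fixes F :: "(nat + nat) set set"
  assumes "intersecting F"
  shows "arcs_meet n r {s. s < n \<and> Inr ` arc xs r s \<in> F}"
  unfolding arcs_meet_def
proof (intro ballI)
  fix s t assume s: "s \<in> {s. s < n \<and> Inr ` arc xs r s \<in> F}" and t: "t \<in> {s. s < n \<and> Inr ` arc xs r s \<in> F}"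
  then have "(Inr ` arc xs r s :: (nat + nat) set) \<inter> Inr ` arc xs r t \<noteq> {}"
    using intersectingD[OF assms] by simp
  then have "arc xs r s \<inter> arc xs r t \<noteq> {}"
    by (simp add: image_Int[symmetric])
  then show "fwd_dist n s t < r \<or> fwd_dist n t s < r"
    using arcs_meet_if_arcs_intersect[OF xs] s t by simp
qed

lemma pendant_arcs_inter:
  "F \<inter> pendant_arcs r xs = (\<lambda>s. Inr ` arc xs r s) ` {s. s < n \<and> Inr ` arc xs r s \<in> F}"
  by (auto simp: pendant_arcs_def length_arrangement[OF xs])

lemma card_pendant_arcs_inter_le:
  assumes "1 \<le> r" "2 * r \<le> n" "intersecting F"
  shows "card (F \<inter> pendant_arcs r xs) \<le> r"
proof -
  have "card (F \<inter> pendant_arcs r xs) \<le> card {s. s < n \<and> Inr ` arc xs r s \<in> F}"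
    unfolding pendant_arcs_inter by (rule card_image_le) simp
  also have "\<dots> \<le> r"
    using assms arcs_meet_pendant_starts by (intro katona_card_le) auto
  finally show ?thesis .
qed

lemma card_mixed_arcs_inter_le:
  assumes "2 \<le> r" "2 * r \<le> n" "intersecting F"
  shows "card (F \<inter> mixed_arcs r xs) \<le> r - 1"
proof -
  define W where "W = {s. s < n \<and> mixed_arc r xs s \<in> F}"
  have "F \<inter> mixed_arcs r xs = mixed_arc r xs ` W"
    by (auto simp: W_def mixed_arcs_def length_arrangement[OF xs])
  then have "card (F \<inter> mixed_arcs r xs) \<le> card W"
    by (simp add: card_image_le W_def)
  moreover have "arcs_meet n (r - 1) W"
    unfolding arcs_meet_def
  proof (intro ballI)
    fix s t assume s: "s \<in> W" and t: "t \<in> W"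
    then have st: "s < n" "t < n" "mixed_arc r xs s \<inter> mixed_arc r xs t \<noteq> {}"
      using intersectingD[OF assms(3)] by (auto simp: W_def)
    show "fwd_dist n s t < r - 1 \<or> fwd_dist n t s < r - 1"
    proof (cases "s = t")
      case False
      then have "circ_pred n s \<noteq> circ_pred n t"
        using circ_pred_inj st(1,2) by blast
      then have "xs ! circ_pred n s \<noteq> xs ! circ_pred n t"
        using arrangement_nth_eq_iff[OF xs circ_pred_less circ_pred_less] st(1,2) by blast
      then have "arc xs (r - 1) s \<inter> arc xs (r - 1) t \<noteq> {}"
        using st(3) length_arrangement[OF xs] by (auto simp: mixed_arc_def)
      then show ?thesis
        using arcs_meet_if_arcs_intersect[OF xs st(1,2)] by blast
    qed (use assms(1) in simp)
  qed
  then have "card W \<le> r - 1"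
    using assms(1,2) by (intro katona_card_le) (auto simp: W_def)
  ultimately show ?thesis
    by linarith
qed

lemma card_star_pendant_arcs_ge:
  assumes "1 \<le> r" "2 * r \<le> n" "c < n"
  shows "r \<le> card (Kstar_star n r (Inr c) \<inter> pendant_arcs r xs)"
proof -
  obtain q where q: "q < n" "xs ! q = c"
    using arrangement_position[OF xs assms(3)] by blast
  define W where "W = {s. s < n \<and> fwd_dist n s q < r}"
  have "r \<le> card W"
    unfolding W_def using card_starts_through_ge[of r n q] q assms by simp
  also have "\<dots> = card ((\<lambda>s. Inr ` arc xs r s :: (nat + nat) set) ` W)"
    using arc_inj[OF xs] assms by (intro card_image[symmetric] inj_onI) (auto simp: W_def inj_image_eq_iff)
  also have "\<dots> \<le> card (Kstar_star n r (Inr c) \<inter> pendant_arcs r xs)"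
  proof (rule card_mono)
    show "finite (Kstar_star n r (Inr c) \<inter> pendant_arcs r xs)"
      using Kstar_star_subset by (intro finite_Kstar_family) blast
    show "(\<lambda>s. Inr ` arc xs r s) ` W \<subseteq> Kstar_star n r (Inr c) \<inter> pendant_arcs r xs"
      using nth_mem_arc_iff[OF xs q(1)] q pendant_arc_in_Kstar_indep assms
      by (auto simp: W_def indep_star_def pendant_arcs_def length_arrangement[OF xs])
  qed
  finally show ?thesis .
qed

lemma card_star_mixed_arcs_ge:
  assumes "1 \<le> r" "r \<le> n" "c < n"
  shows "r - 1 \<le> card (Kstar_star n r (Inr c) \<inter> mixed_arcs r xs)"
proof -
  obtain q where q: "q < n" "xs ! q = c"
    using arrangement_position[OF xs assms(3)] by blast
  define W where "W = {s. s < n \<and> fwd_dist n s q < r - 1}"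
  have "r - 1 \<le> card W"
    unfolding W_def using card_starts_through_ge[of "r - 1" n q] q assms by simp
  also have "\<dots> = card (mixed_arc r xs ` W)"
  proof (intro card_image[symmetric] inj_onI)
    fix s t assume "s \<in> W" "t \<in> W" "mixed_arc r xs s = mixed_arc r xs t"
    then show "s = t"
      using arrangement_nth_eq_iff[OF xs] circ_pred_less circ_pred_inj
      by (auto simp: W_def mixed_arc_def insert_Inl_Inr_eq_iff length_arrangement[OF xs])
  qed
  also have "\<dots> \<le> card (Kstar_star n r (Inr c) \<inter> mixed_arcs r xs)"
  proof (rule card_mono)
    show "finite (Kstar_star n r (Inr c) \<inter> mixed_arcs r xs)"
      using Kstar_star_subset by (intro finite_Kstar_family) blast
    show "mixed_arc r xs ` W \<subseteq> Kstar_star n r (Inr c) \<inter> mixed_arcs r xs"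
      using nth_mem_arc_iff[OF xs q(1)] q mixed_arc_in_Kstar_indep(1) assms
      by (auto simp: W_def indep_star_def mixed_arcs_def mixed_arc_def length_arrangement[OF xs])
  qed
  finally show ?thesis .
qed

end

section \<open>The EKR property of the pendant complete graph\<close>

context
  fixes n r :: nat and F :: "(nat + nat) set set"
  assumes r: "2 \<le> r" "2 * r \<le> n" and F: "F \<subseteq> Kstar_indep n r" "intersecting F"
begin

lemma pendant_part_le:
  assumes c: "c < n"
  shows "card {A\<in>F. A \<subseteq> range Inr} \<le> card {A\<in>Kstar_star n r (Inr c). A \<subseteq> range Inr}"
    and "card {A\<in>F. A \<subseteq> range Inr} = card {A\<in>Kstar_star n r (Inr c). A \<subseteq> range Inr} \<Longrightarrow>
      xs \<in> arrangements n \<Longrightarrow> r \<le> card (F \<inter> pendant_arcs r xs)"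
proof -
  let ?FU = "{A\<in>F. A \<subseteq> range Inr}" and ?GU = "{A\<in>Kstar_star n r (Inr c). A \<subseteq> range Inr}"
  have part: "{A\<in>X. A \<subseteq> range Inr} \<inter> pendant_arcs r xs = X \<inter> pendant_arcs r xs"
    for X xs
    using pendant_arcs_subset_range by blast
  define A0 where "A0 = (Inr ` arc [0..<n] r 0 :: (nat + nat) set)"
  have A0: "A0 \<in> pendant_arcs r [0..<n]" "A0 \<in> Kstar_indep n r" "A0 \<subseteq> range Inr"
    using pendant_arc_in_Kstar_indep[OF upt_arrangement] r by (auto simp: A0_def pendant_arcs_def)
  have orbit: "\<exists>\<pi>. \<pi> permutes {..<n} \<and> A = map_sum \<pi> \<pi> ` A0" if "A \<in> ?FU \<union> ?GU" for A
    using that F(1) A0(2,3) Kstar_star_subset[of n r "Inr c"] by (intro Kstar_pendant_orbit) auto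
  have fin: "finite ?FU" "finite ?GU"
    using finite_Kstar_family[OF F(1)] finite_Kstar_family[OF Kstar_star_subset] by auto
  have le: "card (?FU \<inter> pendant_arcs r xs) \<le> card (?GU \<inter> pendant_arcs r xs)"
    and ge: "r \<le> card (?GU \<inter> pendant_arcs r xs)" if xs: "xs \<in> arrangements n" for xs
  proof -
    show "r \<le> card (?GU \<inter> pendant_arcs r xs)"
      unfolding part using card_star_pendant_arcs_ge[OF xs] r c by simp
    moreover have "card (F \<inter> pendant_arcs r xs) \<le> r"
      using card_pendant_arcs_inter_le[OF xs _ r(2) F(2)] r(1) by simp
    ultimately show "card (?FU \<inter> pendant_arcs r xs) \<le> card (?GU \<inter> pendant_arcs r xs)"
      unfolding part by linarith
  qed
  show "card ?FU \<le> card ?GU"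
    by (rule arrangement_averaging(1)[where \<Phi> = "pendant_arcs r"])
      (fact pendant_arcs_map orbit upt_arrangement A0(1) fin le)+
  show "r \<le> card (F \<inter> pendant_arcs r xs)" if "card ?FU = card ?GU" "xs \<in> arrangements n"
  proof -
    have "card (?FU \<inter> pendant_arcs r xs) = card (?GU \<inter> pendant_arcs r xs)"
      by (rule arrangement_averaging(2)[where \<Phi> = "pendant_arcs r"])
        (fact pendant_arcs_map orbit upt_arrangement A0(1) fin le that)+
    then show ?thesis
      using ge[OF that(2)] part by simp
  qed
qed

lemma mixed_part_le:
  assumes c: "c < n"
  shows "card {A\<in>F. \<not> A \<subseteq> range Inr} \<le> card {A\<in>Kstar_star n r (Inr c). \<not> A \<subseteq> range Inr}"
proof -
  let ?FM = "{A\<in>F. \<not> A \<subseteq> range Inr}" and ?GM = "{A\<in>Kstar_star n r (Inr c). \<not> A \<subseteq> range Inr}"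
  have part: "{A\<in>X. \<not> A \<subseteq> range Inr} \<inter> mixed_arcs r xs = X \<inter> mixed_arcs r xs"
    if "xs \<in> arrangements n" for X xs
    using mixed_arc_in_Kstar_indep(2)[OF that] r length_arrangement[OF that]
    by (auto simp: mixed_arcs_def)
  define A0 where "A0 = mixed_arc r [0..<n] 0"
  have A0: "A0 \<in> mixed_arcs r [0..<n]" "A0 \<in> Kstar_indep n r" "\<not> A0 \<subseteq> range Inr"
    using mixed_arc_in_Kstar_indep[OF upt_arrangement, where r = r and s = 0] r
    by (auto simp: A0_def mixed_arcs_def)
  have orbit: "\<exists>\<pi>. \<pi> permutes {..<n} \<and> A = map_sum \<pi> \<pi> ` A0" if "A \<in> ?FM \<union> ?GM" for A
    using that F(1) A0(2,3) Kstar_star_subset[of n r "Inr c"] by (intro Kstar_mixed_orbit) auto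
  have fin: "finite ?FM" "finite ?GM"
    using finite_Kstar_family[OF F(1)] finite_Kstar_family[OF Kstar_star_subset] by auto
  have le: "card (?FM \<inter> mixed_arcs r xs) \<le> card (?GM \<inter> mixed_arcs r xs)"
    if xs: "xs \<in> arrangements n" for xs
    unfolding part[OF xs]
    using card_mixed_arcs_inter_le[OF xs r F(2)] card_star_mixed_arcs_ge[OF xs, where r = r and c = c] r c
    by simp
  show ?thesis
    by (rule arrangement_averaging(1)[where \<Phi> = "mixed_arcs r"])
      (fact mixed_arcs_map orbit upt_arrangement A0(1) fin le)+
qed

lemma Kstar_intersecting_card_le_star:
  assumes "c < n"
  shows "card F \<le> card (Kstar_star n r (Inr c))"
proof -
  have "card F = card {A\<in>F. A \<subseteq> range Inr} + card {A\<in>F. \<not> A \<subseteq> range Inr}"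
    using finite_Kstar_family[OF F(1)] by (rule card_split_filter)
  also have "\<dots> \<le> card {A\<in>Kstar_star n r (Inr c). A \<subseteq> range Inr}
      + card {A\<in>Kstar_star n r (Inr c). \<not> A \<subseteq> range Inr}"
    using pendant_part_le(1)[OF assms] mixed_part_le[OF assms] by (rule add_mono)
  also have "\<dots> = card (Kstar_star n r (Inr c))"
    using finite_Kstar_family[OF Kstar_star_subset] by (rule card_split_filter[symmetric])
  finally show ?thesis .
qed

end

lemma Kstar_r_EKR:
  assumes "2 \<le> r" "2 * r \<le> n"
  shows "r_EKR (Kstar_V n) Kstar_E r"
    and "max_intersecting (Kstar_V n) Kstar_E r = card (Kstar_star n r (Inr 0))"
proof -
  have "Inr 0 \<in> Kstar_V n"
    using assms by (simp add: Kstar_V_eq)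
  moreover have "card F \<le> card (Kstar_star n r (Inr 0))"
    if "F \<subseteq> Kstar_indep n r" "intersecting F" for F
    using Kstar_intersecting_card_le_star[OF assms that] assms by simp
  ultimately show "r_EKR (Kstar_V n) Kstar_E r"
    and "max_intersecting (Kstar_V n) Kstar_E r = card (Kstar_star n r (Inr 0))"
    using r_EKR_if_star_maximum[OF finite_Kstar_indep] by blast+
qed

lemma mem_if_pendant_star_in_family:
  fixes F :: "(nat + nat) set set"
  assumes r: "1 \<le> r" "2 * r \<le> n" and F: "F \<subseteq> Kstar_indep n r" "intersecting F"
    and x: "x < n" "\<And>T. T \<subseteq> {..<n} \<Longrightarrow> card T = r \<Longrightarrow> x \<in> T \<Longrightarrow> Inr ` T \<in> F"
    and A: "A \<in> F"
  shows "Inr x \<in> A"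
proof (rule ccontr)
  assume x_notin: "Inr x \<notin> A"
  define D where "D = {i. Inr i \<in> A}"
  have A_indep: "finite A" "card A = r" "A \<subseteq> Kstar_V n"
    using A F(1) by (auto simp: indep_rsets_def)
  then have "Inr ` D \<subseteq> A"
    by (auto simp: D_def)
  then have "card (Inr ` D :: (nat + nat) set) \<le> r"
    using card_mono[OF A_indep(1)] A_indep(2) by metis
  then have "card D \<le> r"
    by (simp add: card_image)
  moreover have "insert x D \<subseteq> {..<n}" "x \<notin> D"
    using A_indep(3) x(1) x_notin by (auto simp: D_def Kstar_V_eq)
  moreover have "finite D"
    using finite_subset[OF \<open>insert x D \<subseteq> {..<n}\<close>] by simp
  ultimately have "insert x D \<subseteq> {..<n}" "card (insert x D) + (r - 1) \<le> n"
    using r by auto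
  then obtain R where R: "R \<subseteq> {..<n}" "card R = r - 1" "R \<inter> insert x D = {}"
    by (rule obtain_subset_avoiding)
  then have "finite R"
    by (meson finite_lessThan finite_subset)
  then have "Inr ` insert x R \<in> F"
    using R x r by (intro x(2)) auto
  moreover have "Inr ` insert x R \<inter> A = {}"
    using R x_notin by (auto simp: D_def)
  ultimately show False
    using intersectingD[OF F(2)] A by blast
qed

context
  fixes n r :: nat and F :: "(nat + nat) set set"
  assumes r: "2 \<le> r" "2 * r < n" and F: "F \<subseteq> Kstar_indep n r" "intersecting F"
    and F_max: "card F = card (Kstar_star n r (Inr 0))"
begin

lemma maximum_family_pendant_arcs: "xs \<in> arrangements n \<Longrightarrow> r \<le> card (F \<inter> pendant_arcs r xs)"
proof -
  assume xs: "xs \<in> arrangements n"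
  let ?FU = "{A\<in>F. A \<subseteq> range Inr}" and ?GU = "{A\<in>Kstar_star n r (Inr 0). A \<subseteq> range Inr}"
    and ?FM = "{A\<in>F. \<not> A \<subseteq> range Inr}" and ?GM = "{A\<in>Kstar_star n r (Inr 0). \<not> A \<subseteq> range Inr}"
  have n: "0 < n" "2 * r \<le> n"
    using r by simp_all
  have "card ?FU + card ?FM = card ?GU + card ?GM"
    using card_split_filter[OF finite_Kstar_family[OF F(1)]]
      card_split_filter[OF finite_Kstar_family[OF Kstar_star_subset]] F_max
    by simp
  then have "card ?FU = card ?GU"
    using pendant_part_le(1)[OF r(1) n(2) F n(1)] mixed_part_le[OF r(1) n(2) F n(1)] by linarith
  then show ?thesis
    by (rule pendant_part_le(2)[OF r(1) n(2) F n(1) _ xs])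
qed

lemma maximum_family_circle_star: "circle_star_family n r {S. Inr ` S \<in> F}"
  unfolding circle_star_family_def
proof
  fix xs assume xs: "xs \<in> arrangements n"
  define W where "W = {s. s < n \<and> Inr ` arc xs r s \<in> F}"
  have "r \<le> card (F \<inter> pendant_arcs r xs)"
    by (rule maximum_family_pendant_arcs[OF xs])
  also have "\<dots> \<le> card W"
    unfolding pendant_arcs_inter[OF xs] W_def by (rule card_image_le) simp
  moreover have "card W \<le> r"
    using arcs_meet_pendant_starts[OF xs F(2)] r by (intro katona_card_le[of r n]) (auto simp: W_def)
  ultimately have "card W = r"
    by linarith
  then obtain p where "p < n" "W = {s. s < n \<and> fwd_dist n s p < r}"
    using katona_card_eq[of r n W] arcs_meet_pendant_starts[OF xs F(2)] r by (auto simp: W_def)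
  then show "\<exists>p<n. \<forall>s<n. arc xs r s \<in> {S. Inr ` S \<in> F} \<longleftrightarrow> fwd_dist n s p < r"
    by (auto simp: W_def set_eq_iff)
qed

lemma maximum_family_pendant_nonempty: "{S. Inr ` S \<in> F} \<noteq> {}"
proof -
  have "r \<le> card (F \<inter> pendant_arcs r [0..<n])"
    by (rule maximum_family_pendant_arcs[OF upt_arrangement])
  then have "F \<inter> pendant_arcs r [0..<n] \<noteq> {}"
    using r by auto
  then show ?thesis
    by (auto simp: pendant_arcs_def)
qed

lemma maximum_family_is_star: "\<exists>v\<in>Kstar_V n. F = Kstar_star n r v"
proof -
  let ?H = "{S. Inr ` S \<in> F}"
  have "\<forall>S\<in>?H. S \<subseteq> {..<n} \<and> card S = r"
    using F(1) pendant_set_in_Kstar_indepD by blast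
  moreover have "intersecting ?H"
    unfolding intersecting_def
  proof (intro ballI)
    fix S T assume "S \<in> ?H" "T \<in> ?H"
    then have "(Inr ` S :: (nat + nat) set) \<inter> Inr ` T \<noteq> {}"
      using intersectingD[OF F(2)] by simp
    then show "S \<inter> T \<noteq> {}"
      by auto
  qed
  ultimately have H: "\<forall>S\<in>?H. S \<subseteq> {..<n} \<and> card S = r" "intersecting ?H"
    by blast+
  obtain x where x: "x < n" "\<And>T. T \<subseteq> {..<n} \<Longrightarrow> card T = r \<Longrightarrow> x \<in> T \<Longrightarrow> T \<in> ?H"
    using circle_star_family_is_star[OF _ _ H maximum_family_circle_star maximum_family_pendant_nonempty] r
    by auto
  have "F \<subseteq> Kstar_star n r (Inr x)"
    using mem_if_pendant_star_in_family[of r n F x] x r F by (auto simp: indep_star_def)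
  moreover have "card (Kstar_star n r (Inr x)) \<le> max_intersecting (Kstar_V n) Kstar_E r"
    by (rule card_le_max_intersecting[OF finite_Kstar_indep indep_star_subset intersecting_indep_star])
  then have "card (Kstar_star n r (Inr x)) \<le> card F"
    using Kstar_r_EKR(2)[of r n] r F_max by simp
  ultimately have "F = Kstar_star n r (Inr x)"
    using finite_Kstar_family[OF Kstar_star_subset] by (intro card_seteq)
  then show ?thesis
    using x(1) by (auto simp: Kstar_V_eq)
qed

end

theorem Kstar_strictly_r_EKR:
  assumes "2 \<le> r" "2 * r < n"
  shows "strictly_r_EKR (Kstar_V n) Kstar_E r"
  unfolding strictly_r_EKR_def
proof (intro conjI allI impI)
  show "r_EKR (Kstar_V n) Kstar_E r"
    using Kstar_r_EKR(1) assms by simp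
  fix F assume "F \<subseteq> Kstar_indep n r \<and> intersecting F \<and> card F = max_intersecting (Kstar_V n) Kstar_E r"
  then show "\<exists>v\<in>Kstar_V n. F = Kstar_star n r v"
    using maximum_family_is_star[OF assms] Kstar_r_EKR(2) assms by simp
qed

theorem theorem4:
  fixes n r :: nat
  assumes "n \<ge> 1" and "r \<ge> 1"
  shows "(n \<ge> 2 * r \<longrightarrow> r_EKR (pendant_V (K_V n)) (pendant_E K_E) r)
       \<and> (n > 2 * r \<longrightarrow> strictly_r_EKR (pendant_V (K_V n)) (pendant_E K_E) r)"
proof (cases "r = 1")
  case True
  have "strictly_r_EKR (pendant_V (K_V n)) (pendant_E K_E) 1"
  proof (rule strictly_1_EKR)
    show "finite (Kstar_V n)" "Inr 0 \<in> Kstar_V n" "\<forall>v\<in>Kstar_V n. \<not> Kstar_E v v"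
      using assms(1) by (auto simp: Kstar_V_eq K_E_def)
  qed
  then show ?thesis
    using True by (simp add: strictly_r_EKR_def)
next
  case False
  then have "2 \<le> r"
    using assms(2) by simp
  then show ?thesis
    using Kstar_r_EKR(1) Kstar_strictly_r_EKR by simp
qed

end
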